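(* A tetrahedron $\mathcal T$ has an obtuse cycle if and only if there exists $O\in\operatorname{int}\mathcal T$ such that $(\mathcal T,O)$ is mono-unstable.
   Context: An obtuse cycle of a tetrahedron is a labelling $A,B,C,D$ of its four vertices (giving the edge cycle $A-B-C-D-A$) such that the face angles $\angle ABC$, $\angle BCD$ and $\angle CDA$ are all obtuse. For $O\in\operatorname{int}\mathcal T$, $(\mathcal T,O)$ is in (unstable) equilibrium on a vertex $V$ if the plane perpendicular to $[O,V]$ at $V$ supports $\mathcal T$; $(\mathcal T,O)$ is mono-unstable if exactly one vertex carries such an equilibrium. *)

theory Defs
  imports "HOL-Analysis.Analysis"
begin

text \<open>A tetrahedron in R^3 is given by its vertex set: four affinely independent points.
  The solid tetrahedron is the convex hull of its vertices.\<close>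
definition is_tetrahedron :: "(real^3) set \<Rightarrow> bool" where
  "is_tetrahedron V \<longleftrightarrow> finite V \<and> card V = 4 \<and> \<not> affine_dependent V"

definition obtuse_angle :: "real^3 \<Rightarrow> real^3 \<Rightarrow> real^3 \<Rightarrow> bool" where
  "obtuse_angle A B C \<longleftrightarrow> (A - B) \<bullet> (C - B) < 0"

definition has_obtuse_cycle :: "(real^3) set \<Rightarrow> bool" where
  "has_obtuse_cycle V \<longleftrightarrow>
     (\<exists>A B C D. V = {A, B, C, D} \<and> distinct [A, B, C, D] \<and>
        obtuse_angle A B C \<and> obtuse_angle B C D \<and> obtuse_angle C D A)"

definition supports_plane :: "real^3 \<Rightarrow> real^3 \<Rightarrow> (real^3) set \<Rightarrow> bool" where
  "supports_plane P n S \<longleftrightarrow> (\<forall>x\<in>S. (x - P) \<bullet> n \<le> 0) \<or> (\<forall>x\<in>S. (x - P) \<bullet> n \<ge> 0)"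

definition equilibrium_on :: "(real^3) set \<Rightarrow> real^3 \<Rightarrow> real^3 \<Rightarrow> bool" where
  "equilibrium_on V c v \<longleftrightarrow> supports_plane v (v - c) (convex hull V)"

definition mono_unstable :: "(real^3) set \<Rightarrow> real^3 \<Rightarrow> bool" where
  "mono_unstable V c \<longleftrightarrow> (\<exists>!v. v \<in> V \<and> equilibrium_on V c v)"

end

theory Submission
  imports Defs
begin

(* For O in the tetrahedron, (T,O) is in equilibrium on v iff no edge vw makes an obtuse angle
  with [v,O], so the vertex farthest from O is always in equilibrium.  If v is not, some angle
  wvO is obtuse, and as O is a convex combination of the vertices, so is some face angle wvx.
  Hence mono-unstability on A gives an obtuse face angle at each of B, C, D, and any three such
  angles contain an obtuse cycle.  Conversely, for an obtuse cycle ABCD choose O in the interior,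
  close to C and on the same side as B of the plane through C perpendicular to CD: the angles
  ABO and ODA are still obtuse, and so is DCO, so A is the only vertex in equilibrium. *)

lemma obtuse_angle_commute: "obtuse_angle A B C \<longleftrightarrow> obtuse_angle C B A"
  by (simp add: obtuse_angle_def inner_commute)

lemma obtuse_angle_distinct: "obtuse_angle A B C \<Longrightarrow> distinct [A, B, C]"
  by (auto simp: obtuse_angle_def) (metis inner_ge_zero not_le)

lemma obtuse_angle_iff_dist:
  "obtuse_angle A B C \<longleftrightarrow> (dist A B)\<^sup>2 + (dist C B)\<^sup>2 < (dist A C)\<^sup>2"
proof -
  have "(dist A C)\<^sup>2 = (dist A B)\<^sup>2 + (dist C B)\<^sup>2 - 2 * ((A - B) \<bullet> (C - B))"
    unfolding dist_norm power2_norm_eq_inner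
    by (simp add: inner_diff_left inner_diff_right inner_commute)
  then show ?thesis
    unfolding obtuse_angle_def by linarith
qed

lemma obtuse_angle_at_cases:
  assumes "obtuse_angle w v x" and "w \<in> {v, y1, y2, y3}" and "x \<in> {v, y1, y2, y3}"
  shows "obtuse_angle y1 v y2 \<or> obtuse_angle y1 v y3 \<or> obtuse_angle y2 v y3"
  using assms obtuse_angle_distinct[OF assms(1)] by (auto simp: obtuse_angle_commute)

lemma has_obtuse_cycleI:
  "obtuse_angle A B C \<Longrightarrow> obtuse_angle B C D \<Longrightarrow> obtuse_angle C D A \<Longrightarrow>
    V = {A, B, C, D} \<Longrightarrow> distinct [A, B, C, D] \<Longrightarrow> has_obtuse_cycle V"
  unfolding has_obtuse_cycle_def by blast

lemma has_obtuse_cycle_if_obtuse_at_three_vertices: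
  assumes "distinct [A, B, C, D]"
    and "obtuse_angle A B C \<or> obtuse_angle A B D \<or> obtuse_angle C B D"
    and "obtuse_angle A C B \<or> obtuse_angle A C D \<or> obtuse_angle B C D"
    and "obtuse_angle A D B \<or> obtuse_angle A D C \<or> obtuse_angle B D C"
  shows "has_obtuse_cycle {A, B, C, D}"
proof -
  (* Let the obtuse angle at v lie in the face opposite \<sigma> v.  In squared edge lengths each
    obtuse angle is a linear inequality, and linear arithmetic shows: no face has two obtuse
    angles, so \<sigma> is injective; \<sigma> does not permute B, C, D cyclically (the inequalities
    would add up to a negative sum of squares); a swap of two of B, C, D with the third sent to A
    is an obtuse cycle starting at A; and a chain \<sigma> v1 = v2, \<sigma> v2 = v3, \<sigma> v3 = A forces
    a further obtuse angle at v2 opposite v1, which yields such a swap. *)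
  have "(obtuse_angle A B C \<and> obtuse_angle B C D \<and> obtuse_angle C D A) \<or>
        (obtuse_angle A B D \<and> obtuse_angle B D C \<and> obtuse_angle D C A) \<or>
        (obtuse_angle A C B \<and> obtuse_angle C B D \<and> obtuse_angle B D A) \<or>
        (obtuse_angle A C D \<and> obtuse_angle C D B \<and> obtuse_angle D B A) \<or>
        (obtuse_angle A D B \<and> obtuse_angle D B C \<and> obtuse_angle B C A) \<or>
        (obtuse_angle A D C \<and> obtuse_angle D C B \<and> obtuse_angle C B A)"
    using assms(2-4) zero_le_power2[of "dist A B"] zero_le_power2[of "dist A C"]
      zero_le_power2[of "dist A D"] zero_le_power2[of "dist B C"]
      zero_le_power2[of "dist B D"] zero_le_power2[of "dist C D"]
    unfolding obtuse_angle_iff_dist dist_commute[of B A] dist_commute[of C A]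
      dist_commute[of D A] dist_commute[of C B] dist_commute[of D B] dist_commute[of D C]
    by smt
  then show ?thesis
    using assms(1) by (elim disjE conjE) (rule has_obtuse_cycleI, assumption+, auto)+
qed

lemma convex_hull_inner_lessE:
  fixes V :: "'a::real_inner set"
  assumes "c \<in> convex hull V" and "a \<bullet> c < b"
  obtains x where "x \<in> V" and "a \<bullet> x < b"
proof -
  have "\<not> V \<subseteq> {x. b \<le> a \<bullet> x}"
  proof
    assume "V \<subseteq> {x. b \<le> a \<bullet> x}"
    then have "convex hull V \<subseteq> {x. b \<le> a \<bullet> x}"
      by (intro hull_minimal convex_halfspace_ge)
    with assms show False by auto
  qed
  then obtain x where "x \<in> V" "\<not> b \<le> a \<bullet> x"
    by blast
  then show ?thesis
    using that by (simp add: not_le)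
qed

lemma equilibrium_on_iff:
  assumes "c \<in> convex hull V"
  shows "equilibrium_on V c v \<longleftrightarrow> (\<forall>w\<in>V. 0 \<le> (w - v) \<bullet> (c - v))"
proof
  have flip: "(x - v) \<bullet> (v - c) = - ((x - v) \<bullet> (c - v))" for x
    by (simp add: inner_diff_right)
  assume "equilibrium_on V c v"
  then consider "\<forall>x\<in>convex hull V. (x - v) \<bullet> (v - c) \<le> 0"
    | "\<forall>x\<in>convex hull V. 0 \<le> (x - v) \<bullet> (v - c)"
    unfolding equilibrium_on_def supports_plane_def by blast
  then show "\<forall>w\<in>V. 0 \<le> (w - v) \<bullet> (c - v)"
  proof cases
    case 1
    then show ?thesis
      by (simp add: flip hull_inc)
  next
    case 2
    then have "(c - v) \<bullet> (c - v) \<le> 0"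
      using assms flip[of c] by fastforce
    then have "(c - v) \<bullet> (c - v) = 0"
      using inner_ge_zero[of "c - v"] by linarith
    then have "c = v"
      by simp
    then show ?thesis
      by simp
  qed
next
  assume "\<forall>w\<in>V. 0 \<le> (w - v) \<bullet> (c - v)"
  then have "V \<subseteq> {x. (c - v) \<bullet> v \<le> (c - v) \<bullet> x}"
    by (auto simp: inner_diff_left inner_commute)
  then have "convex hull V \<subseteq> {x. (c - v) \<bullet> v \<le> (c - v) \<bullet> x}"
    by (intro hull_minimal convex_halfspace_ge)
  then show "equilibrium_on V c v"
    unfolding equilibrium_on_def supports_plane_def
    by (auto simp: inner_diff_left inner_diff_right inner_commute)
qed

lemma not_equilibrium_onI:
  assumes "c \<in> convex hull V" and "w \<in> V" and "(w - v) \<bullet> (c - v) < 0"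
  shows "\<not> equilibrium_on V c v"
  using assms by (auto simp: equilibrium_on_iff not_le)

lemma obtuse_angle_if_not_equilibrium_on:
  assumes "c \<in> convex hull V" and "\<not> equilibrium_on V c v"
  obtains w x where "w \<in> V" and "x \<in> V" and "obtuse_angle w v x"
proof -
  obtain w where w: "w \<in> V" "(w - v) \<bullet> (c - v) < 0"
    using assms by (auto simp: equilibrium_on_iff not_le)
  then have "(w - v) \<bullet> c < (w - v) \<bullet> v"
    by (simp add: inner_diff_right)
  then obtain x where "x \<in> V" "(w - v) \<bullet> x < (w - v) \<bullet> v"
    using convex_hull_inner_lessE[OF assms(1)] by blast
  then show ?thesis
    using that w(1) by (simp add: obtuse_angle_def inner_diff_right)
qed

lemma ex_equilibrium_on:
  assumes "finite V" and "V \<noteq> {}" and "c \<in> convex hull V"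
  obtains v where "v \<in> V" and "equilibrium_on V c v"
proof -
  have "Max ((\<lambda>w. dist w c) ` V) \<in> (\<lambda>w. dist w c) ` V"
    using assms(1,2) by simp
  then obtain v where v: "v \<in> V" and "dist v c = Max ((\<lambda>w. dist w c) ` V)"
    by auto
  then have farthest: "dist w c \<le> dist v c" if "w \<in> V" for w
    using that assms(1) by simp
  have "0 \<le> (w - v) \<bullet> (c - v)" if "w \<in> V" for w
  proof -
    have "(dist w c)\<^sup>2 \<le> (dist v c)\<^sup>2"
      using farthest[OF that] by (simp add: power_mono)
    moreover have "(dist w c)\<^sup>2 = (dist w v)\<^sup>2 + (dist v c)\<^sup>2 - 2 * ((w - v) \<bullet> (c - v))"
      unfolding dist_norm power2_norm_eq_inner
      by (simp add: inner_diff_left inner_diff_right inner_commute)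
    ultimately show ?thesis
      using zero_le_power2[of "dist w v"] by linarith
  qed
  then show ?thesis
    using that v assms(3) by (simp add: equilibrium_on_iff)
qed

lemma mono_unstableI:
  assumes "finite V" and "c \<in> convex hull V" and "v \<in> V"
    and "\<And>w. w \<in> V \<Longrightarrow> w \<noteq> v \<Longrightarrow> \<not> equilibrium_on V c w"
  shows "mono_unstable V c"
proof -
  obtain u where "u \<in> V" "equilibrium_on V c u"
    using ex_equilibrium_on assms(1-3) by blast
  with assms(4) have "u = v"
    by blast
  with \<open>u \<in> V\<close> \<open>equilibrium_on V c u\<close> assms(4) show ?thesis
    unfolding mono_unstable_def by blast
qed

lemma has_obtuse_cycle_if_mono_unstable:
  assumes "is_tetrahedron V" and "c \<in> convex hull V" and "mono_unstable V c"
  shows "has_obtuse_cycle V"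
proof -
  obtain A where "A \<in> V" and unique: "\<And>v. v \<in> V \<Longrightarrow> equilibrium_on V c v \<Longrightarrow> v = A"
    using assms(3) unfolding mono_unstable_def by blast
  then have "card (V - {A}) = 3"
    using assms(1) by (simp add: is_tetrahedron_def)
  then obtain B C D where BCD: "V - {A} = {B, C, D}" "B \<noteq> C" "B \<noteq> D" "C \<noteq> D"
    by (auto simp: card_3_iff)
  have V: "V = {A, B, C, D}" and distinct: "distinct [A, B, C, D]"
    using BCD \<open>A \<in> V\<close> by auto
  have obtuse_at: "obtuse_angle y1 v y2 \<or> obtuse_angle y1 v y3 \<or> obtuse_angle y2 v y3"
    if "V = {v, y1, y2, y3}" and "v \<noteq> A" for v y1 y2 y3
  proof -
    have "\<not> equilibrium_on V c v"
      using unique that by blast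
    then obtain w x where "w \<in> V" "x \<in> V" "obtuse_angle w v x"
      by (rule obtuse_angle_if_not_equilibrium_on[OF assms(2)])
    then show ?thesis
      using obtuse_angle_at_cases that(1) by blast
  qed
  have "obtuse_angle A B C \<or> obtuse_angle A B D \<or> obtuse_angle C B D"
    by (rule obtuse_at) (use V distinct in auto)
  moreover have "obtuse_angle A C B \<or> obtuse_angle A C D \<or> obtuse_angle B C D"
    by (rule obtuse_at) (use V distinct in auto)
  moreover have "obtuse_angle A D B \<or> obtuse_angle A D C \<or> obtuse_angle B D C"
    by (rule obtuse_at) (use V distinct in auto)
  ultimately show ?thesis
    unfolding V by (rule has_obtuse_cycle_if_obtuse_at_three_vertices[OF distinct])
qed

lemma tetrahedron_interior_nonempty:
  assumes "is_tetrahedron V"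
  shows "interior (convex hull V) \<noteq> {}"
proof -
  have "finite V" "card V = 4" "\<not> affine_dependent V"
    using assms by (auto simp: is_tetrahedron_def)
  then have "(\<Sum>x\<in>V. (1/4 :: real) *\<^sub>R x) \<in> interior (convex hull V)"
    by (auto simp: interior_convex_hull_explicit_minimal intro!: exI[of _ "\<lambda>_. 1/4"])
  then show ?thesis
    by blast
qed

lemma convex_interior_Int_openE:
  fixes S :: "'a::euclidean_space set"
  assumes "convex S" and "interior S \<noteq> {}" and "x \<in> closure S" and "open U" and "x \<in> U"
  obtains q where "q \<in> interior S" and "q \<in> U"
proof -
  have "x \<in> closure (interior S)"
    using assms(1-3) by (simp add: convex_closure_interior)
  with assms(4,5) have "U \<inter> interior S \<noteq> {}"
    using open_Int_closure_eq_empty by blast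
  then show ?thesis
    using that by blast
qed

lemma eventually_inner_neg_along_segment:
  fixes a b p q :: "'a::real_inner"
  assumes "a \<bullet> (p - b) < 0"
  shows "\<forall>\<^sub>F t in at_right 0. a \<bullet> (p - t *\<^sub>R (p - q) - b) < 0"
proof -
  have "((\<lambda>t. a \<bullet> (p - t *\<^sub>R (p - q) - b)) \<longlongrightarrow> a \<bullet> (p - b)) (at_right 0)"
    by (auto intro!: tendsto_eq_intros)
  then show ?thesis
    using assms by (rule order_tendstoD(2))
qed

lemma mono_unstable_if_obtuse_cycle:
  assumes "is_tetrahedron {A, B, C, D}"
    and ABC: "obtuse_angle A B C" and BCD: "obtuse_angle B C D" and CDA: "obtuse_angle C D A"
  obtains c where "c \<in> interior (convex hull {A, B, C, D})" and "mono_unstable {A, B, C, D} c"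
proof -
  define H where "H = convex hull {A, B, C, D}"
  have "convex H" and "closed H"
    by (simp_all add: H_def compact_imp_closed finite_imp_compact_convex_hull)
  moreover have "interior H \<noteq> {}"
    unfolding H_def by (rule tetrahedron_interior_nonempty[OF assms(1)])
  moreover have "B \<in> closure H"
    using \<open>closed H\<close> by (simp add: H_def hull_inc)
  moreover have "B \<in> {y. (D - C) \<bullet> y < (D - C) \<bullet> C}"
    using BCD by (simp add: obtuse_angle_def inner_diff_right inner_commute)
  ultimately obtain q where q: "q \<in> interior H" "(D - C) \<bullet> q < (D - C) \<bullet> C"
    using convex_interior_Int_openE[OF _ _ _ open_halfspace_lt] by blast
  have "\<forall>\<^sub>F t in at_right (0::real). 0 < t \<and> t \<le> 1"
    unfolding eventually_at_right_field by (intro exI[of _ 1]) auto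
  moreover have "\<forall>\<^sub>F t in at_right 0. (A - B) \<bullet> (C - t *\<^sub>R (C - q) - B) < 0"
    using ABC by (intro eventually_inner_neg_along_segment) (simp add: obtuse_angle_def)
  moreover have "\<forall>\<^sub>F t in at_right 0. (A - D) \<bullet> (C - t *\<^sub>R (C - q) - D) < 0"
    using CDA by (intro eventually_inner_neg_along_segment) (simp add: obtuse_angle_def inner_commute)
  ultimately have "\<forall>\<^sub>F t in at_right 0. (0 < t \<and> t \<le> 1) \<and>
      (A - B) \<bullet> (C - t *\<^sub>R (C - q) - B) < 0 \<and> (A - D) \<bullet> (C - t *\<^sub>R (C - q) - D) < 0"
    by eventually_elim blast
  then obtain t where t: "0 < t" "t \<le> 1"
    and "(A - B) \<bullet> (C - t *\<^sub>R (C - q) - B) < 0" "(A - D) \<bullet> (C - t *\<^sub>R (C - q) - D) < 0"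
    using eventually_happens'[of "at_right (0::real)"] by auto
  moreover define c where "c = C - t *\<^sub>R (C - q)"
  ultimately have at_B: "(A - B) \<bullet> (c - B) < 0" and at_D: "(A - D) \<bullet> (c - D) < 0"
    by simp_all
  have "c \<in> interior H"
    unfolding c_def using \<open>convex H\<close> q(1) \<open>closed H\<close> t
    by (intro mem_interior_closure_convex_shrink) (auto simp: H_def hull_inc)
  then have hull: "c \<in> convex hull {A, B, C, D}"
    using interior_subset H_def by blast
  have "(D - C) \<bullet> (c - C) = t * ((D - C) \<bullet> q - (D - C) \<bullet> C)"
    by (simp add: c_def inner_diff_right algebra_simps)
  with t(1) q(2) have at_C: "(D - C) \<bullet> (c - C) < 0"
    by (simp add: mult_pos_neg)
  have "\<not> equilibrium_on {A, B, C, D} c B"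
    using not_equilibrium_onI[OF hull _ at_B] by simp
  moreover have "\<not> equilibrium_on {A, B, C, D} c C"
    using not_equilibrium_onI[OF hull _ at_C] by simp
  moreover have "\<not> equilibrium_on {A, B, C, D} c D"
    using not_equilibrium_onI[OF hull _ at_D] by simp
  ultimately have "mono_unstable {A, B, C, D} c"
    using hull by (intro mono_unstableI[of _ _ A]) auto
  with \<open>c \<in> interior H\<close> show ?thesis
    using that unfolding H_def by blast
qed

theorem theorem1p10:
  fixes V :: "(real^3) set"
  assumes "is_tetrahedron V"
  shows "has_obtuse_cycle V \<longleftrightarrow>
         (\<exists>c \<in> interior (convex hull V). mono_unstable V c)"
proof
  assume "has_obtuse_cycle V"
  then obtain A B C D where V: "V = {A, B, C, D}"
    and obtuse: "obtuse_angle A B C" "obtuse_angle B C D" "obtuse_angle C D A"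
    unfolding has_obtuse_cycle_def by blast
  obtain c where "c \<in> interior (convex hull V)" "mono_unstable V c"
    using mono_unstable_if_obtuse_cycle[OF assms[unfolded V] obtuse] unfolding V by blast
  then show "\<exists>c \<in> interior (convex hull V). mono_unstable V c"
    by blast
next
  assume "\<exists>c \<in> interior (convex hull V). mono_unstable V c"
  then show "has_obtuse_cycle V"
    using has_obtuse_cycle_if_mono_unstable[OF assms] interior_subset by blast
qed

end
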